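(* Let $F\in Sh^{s,0}_{\Lambda_L}(X)\cap Mod(X)$ be reduced, let $f=(f_1,\dots,f_r)$ be a local trivialization for $F$ and $f^{-1}=(f_1^{-1},\dots,f_r^{-1})$ a choice of right inverses $f_s^{-1}:k\to V$. Then the assignment on generators $\epsilon(c_{st})=f_s\circ A_{c_{st}}\circ(\mathrm{id}_V-M_t)\circ f_t^{-1}$, $\epsilon(\lambda_s)=f_s\circ A_{\ell_s}\circ f_s^{-1}$, $\epsilon(\mu_s)=1-f_s\circ(\mathrm{id}_V-M_s)\circ f_s^{-1}$ extends to a well-defined unital ring homomorphism $\epsilon_{(F,f,f^{-1})}:\mathrm{Cord}(L)\to k$, i.e. an augmentation.
   Context: $X=\mathbb{R}^3$ or $S^3$, $k$ a field, $(L,L')$ an $r$-component framed oriented link, $L=K_1\sqcup\dots\sqcup K_r$, $L'=\ell_1\sqcup\dots\sqcup\ell_r$ with marked points $*_s\in\ell_s$. Framed cord algebra: a framed cord is a path $c:[0,1]\to X\setminus L$ with endpoints in $L'\setminus\{*_s\}$, $c_{st}$ one from $\ell_s$ to $\ell_t$, $\cdot$ denotes concatenation (first path first). $\mathrm{Cord}(L)$ is the unital ring generated by homotopy classes of framed cords and $\lambda_s^{\pm1},\mu_s^{\pm1}$ (inverse pairs, the $\lambda$'s and $\mu$'s pairwise commuting but not commuting with cords) modulo: $[e_s]=1-\mu_s$ ($e_s$ constant cord on $\ell_s$); $[m_s\cdot c_{st}]=\mu_s[c_{st}]$, $[c_{st}\cdot m_t]=[c_{st}]\mu_t$ ($m_s$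 meridian of $K_s$ based at the endpoint); $[\ell_s\cdot c_{st}]=\lambda_s[c_{st}]$, $[c_{st}\cdot\ell_t]=[c_{st}]\lambda_t$ ($\ell_s$ the loop along the framing curve from the endpoint); $[c_{sk}\cdot c_{kt}]=[c_{sk}\cdot m_k\cdot c_{kt}]+[c_{sk}][c_{kt}]$. Sheaves: $Sh^{s,0}_{\Lambda_L}(X)\cap Mod(X)$ consists of sheaves of $k$-vector spaces with micro-support at infinity in the unit conormal $\Lambda_L$, microlocally simple with Morse cone in degree $0$; such $F$ is equivalent to data $(V,\rho,W_s,\rho_s,T_s)$ where $\rho:\pi_1(X\setminus L)\to GL(V)$ is the local system on $X\setminus L$, $W_s$ is the stalk on $K_s$, and $T_s:W_s\to V$ is the (injective, corank one) restriction map, the meridian of $K_s$ acting trivially on its image and the longitude action intertwining with the monodromy of $K_s$; we view $W_s\subset V$ (stalks at points of $\ell_s$ being identified with $V$). For a path $c$ in $X\setminus L$, $A_c:V\to V$ is the trivialized parallel transport (pullback $F_{c(1)}\to F_{c(0)}$), so $A_{c_1\cdot c_2}=A_{c_1}\circ A_{c_2}$; $M_t=A_{m_t}=\rho(m_t)$. $F$ is reduced if (1) there is no exact sequence $0\to\mathcal{L}_X\to F\to F'\to0$, (2) no exact sequence $0\to F'\to F\to\mathcal{L}_X\to0$, with $0\neq\mathcal{L}_X$ locally constant, and (3) $F$ has no direct summand $F'$ with an exact sequence $0\to F'\to\mathcal{L}_X\to i'_*k_{L''}\to0$, $\mathcal{L}_X\neq0$ locally constant, $L''\subset L$ a sublink.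 A local trivialization for $F$ is an $r$-tuple of surjective linear maps $f_s:V\to k$ with $f_s|_{W_s}=0$. *)

theory Defs
  imports "HOL-Analysis.Analysis"
begin

section \<open>Framed oriented links, modelled by disjoint solid-torus embeddings\<close>

text \<open>Component s of the framed link is
  given by a topological embedding Phi s of the solid torus into X; the knot K_s is the core
  Phi s (S^1 x {0}) (oriented by the S^1 coordinate), the framing curve l_s is
  Phi s (S^1 x {1/2}), and the marked point on l_s is Phi s (1, 1/2).\<close>

definition solid_torus :: "(complex \<times> complex) set" where
  "solid_torus = sphere 0 1 \<times> cball 0 1"

definition framed_link :: "'a::euclidean_space set \<Rightarrow> nat \<Rightarrow> (nat \<Rightarrow> complex \<times> complex \<Rightarrow> 'a) \<Rightarrow> bool" where
  "framed_link X r Phi \<longleftrightarrow>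
     (\<forall>s<r. continuous_on solid_torus (Phi s) \<and> inj_on (Phi s) solid_torus \<and> Phi s ` solid_torus \<subseteq> X) \<and>
     (\<forall>s<r. \<forall>t<r. s \<noteq> t \<longrightarrow> Phi s ` solid_torus \<inter> Phi t ` solid_torus = {})"

definition link_set :: "nat \<Rightarrow> (nat \<Rightarrow> complex \<times> complex \<Rightarrow> 'a) \<Rightarrow> 'a set" where
  "link_set r Phi = (\<Union>s<r. Phi s ` (sphere 0 1 \<times> {0}))"

definition framing_curve :: "(nat \<Rightarrow> complex \<times> complex \<Rightarrow> 'a) \<Rightarrow> nat \<Rightarrow> 'a set" where
  "framing_curve Phi s = Phi s ` (sphere 0 1 \<times> {1/2})"

definition marked_point :: "(nat \<Rightarrow> complex \<times> complex \<Rightarrow> 'a) \<Rightarrow> nat \<Rightarrow> 'a" where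
  "marked_point Phi s = Phi s (1, 1/2)"

definition arc :: "(nat \<Rightarrow> complex \<times> complex \<Rightarrow> 'a) \<Rightarrow> nat \<Rightarrow> 'a set" where
  "arc Phi s = framing_curve Phi s - {marked_point Phi s}"

definition base_point :: "(nat \<Rightarrow> complex \<times> complex \<Rightarrow> 'a) \<Rightarrow> nat \<Rightarrow> 'a" where
  "base_point Phi s = Phi s (-1, 1/2)"

text \<open>Meridian m_s of K_s based at a point p of l_s (a small circle linking K_s once), and
  the loop along the framing curve l_s starting at p (in the direction of the orientation).\<close>
definition meridian :: "(nat \<Rightarrow> complex \<times> complex \<Rightarrow> 'a) \<Rightarrow> nat \<Rightarrow> 'a \<Rightarrow> real \<Rightarrow> 'a" where
  "meridian Phi s p = (\<lambda>t. Phi s (fst (inv_into solid_torus (Phi s) p), cis (2 * pi * t) / 2))"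

definition longitude :: "(nat \<Rightarrow> complex \<times> complex \<Rightarrow> 'a) \<Rightarrow> nat \<Rightarrow> 'a \<Rightarrow> real \<Rightarrow> 'a" where
  "longitude Phi s p = (\<lambda>t. Phi s (fst (inv_into solid_torus (Phi s) p) * cis (2 * pi * t), 1/2))"

definition framed_cord ::
  "'a::euclidean_space set \<Rightarrow> nat \<Rightarrow> (nat \<Rightarrow> complex \<times> complex \<Rightarrow> 'a) \<Rightarrow> nat \<Rightarrow> nat \<Rightarrow> (real \<Rightarrow> 'a) \<Rightarrow> bool" where
  "framed_cord X r Phi s t c \<longleftrightarrow> s < r \<and> t < r \<and> path c \<and> path_image c \<subseteq> X - link_set r Phi \<and>
     pathstart c \<in> arc Phi s \<and> pathfinish c \<in> arc Phi t"

definition cord_path :: "'a::euclidean_space set \<Rightarrow> nat \<Rightarrow> (nat \<Rightarrow> complex \<times> complex \<Rightarrow> 'a) \<Rightarrow> (real \<Rightarrow> 'a) \<Rightarrow> bool" where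
  "cord_path X r Phi c \<longleftrightarrow> (\<exists>s t. framed_cord X r Phi s t c)"

definition framed_cord_homotopic ::
  "'a::euclidean_space set \<Rightarrow> nat \<Rightarrow> (nat \<Rightarrow> complex \<times> complex \<Rightarrow> 'a) \<Rightarrow> nat \<Rightarrow> nat \<Rightarrow> (real \<Rightarrow> 'a) \<Rightarrow> (real \<Rightarrow> 'a) \<Rightarrow> bool" where
  "framed_cord_homotopic X r Phi s t c d \<longleftrightarrow>
     homotopic_with_canon (\<lambda>q. pathstart q \<in> arc Phi s \<and> pathfinish q \<in> arc Phi t)
       {0..1} (X - link_set r Phi) c d"

text \<open>Cord(L) is the unital ring presented by generators (homotopy classes of framed cords,
  lambda_s^{+-1}, mu_s^{+-1}) and relations.  A unital ring homomorphism Cord(L) -> k into the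
  (commutative) field k is therefore exactly an assignment of values to the generators that is
  constant on homotopy classes, sends lambda_s, mu_s to invertible elements (their inverses being
  the values of lambda_s^{-1}, mu_s^{-1}) and satisfies all defining relations.  The
  commutation relations among lambda's and mu's hold automatically in k.\<close>
definition cord_augmentation ::
  "'a::euclidean_space set \<Rightarrow> nat \<Rightarrow> (nat \<Rightarrow> complex \<times> complex \<Rightarrow> 'a) \<Rightarrow>
   (nat \<Rightarrow> nat \<Rightarrow> (real \<Rightarrow> 'a) \<Rightarrow> 'k::field) \<Rightarrow> (nat \<Rightarrow> 'k) \<Rightarrow> (nat \<Rightarrow> 'k) \<Rightarrow> bool" where
  "cord_augmentation X r Phi ec el em \<longleftrightarrow>
     (\<forall>s<r. el s \<noteq> 0 \<and> em s \<noteq> 0) \<and>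
     (\<forall>s t c d. framed_cord X r Phi s t c \<and> framed_cord X r Phi s t d \<and>
        framed_cord_homotopic X r Phi s t c d \<longrightarrow> ec s t c = ec s t d) \<and>
     (\<forall>s<r. \<forall>p\<in>arc Phi s. ec s s (\<lambda>_. p) = 1 - em s) \<and>
     (\<forall>s t c. framed_cord X r Phi s t c \<longrightarrow>
        ec s t (meridian Phi s (pathstart c) +++ c) = em s * ec s t c \<and>
        ec s t (c +++ meridian Phi t (pathfinish c)) = ec s t c * em t \<and>
        ec s t (longitude Phi s (pathstart c) +++ c) = el s * ec s t c \<and>
        ec s t (c +++ longitude Phi t (pathfinish c)) = ec s t c * el t) \<and>
     (\<forall>s k t c1 c2. framed_cord X r Phi s k c1 \<and> framed_cord X r Phi k t c2 \<and>
        pathfinish c1 = pathstart c2 \<longrightarrow>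
        ec s t (c1 +++ c2) =
          ec s t (c1 +++ (meridian Phi k (pathfinish c1) +++ c2)) + ec s k c1 * ec k t c2)"

section \<open>Sheaves in Sh^{s,0}_{Lambda_L}(X) \<inter> Mod(X) via their linear-algebraic data\<close>

text \<open>V is the k-vector space 'v (with scalar multiplication sc).  A c : V -> V is the
  trivialized parallel transport of the local system on X \ L along a path c whose endpoints lie
  on the punctured framing curves (pullback F_{c(1)} -> F_{c(0)}), so A (c1 +++ c2) = A c1 o A c2;
  stalks along l_s - {*_s} are identified with V, i.e. transport inside the arc is the identity.\<close>
definition local_system_data ::
  "('k::field \<Rightarrow> 'v::ab_group_add \<Rightarrow> 'v) \<Rightarrow> 'a::euclidean_space set \<Rightarrow> nat \<Rightarrow>
   (nat \<Rightarrow> complex \<times> complex \<Rightarrow> 'a) \<Rightarrow> ((real \<Rightarrow> 'a) \<Rightarrow> 'v \<Rightarrow> 'v) \<Rightarrow> bool" where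
  "local_system_data sc X r Phi A \<longleftrightarrow>
     (\<forall>c. cord_path X r Phi c \<longrightarrow> Vector_Spaces.linear sc sc (A c)) \<and>
     (\<forall>c d. cord_path X r Phi c \<and> cord_path X r Phi d \<and>
        homotopic_paths (X - link_set r Phi) c d \<longrightarrow> A c = A d) \<and>
     (\<forall>c d. cord_path X r Phi c \<and> cord_path X r Phi d \<and> pathfinish c = pathstart d \<longrightarrow>
        A (c +++ d) = A c \<circ> A d) \<and>
     (\<forall>s<r. \<forall>c. path c \<and> path_image c \<subseteq> arc Phi s \<longrightarrow> A c = id)"

text \<open>The data (V, rho, W_s, rho_s, T_s) of F: W_s \<subseteq> V (image of the injective corank-one
  restriction map T_s), the meridian of K_s acts trivially on W_s, and the longitude action
  restricts to an automorphism of W_s (the monodromy rho_s of K_s, intertwined by T_s).\<close>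
definition sheaf_data ::
  "('k::field \<Rightarrow> 'v::ab_group_add \<Rightarrow> 'v) \<Rightarrow> 'a::euclidean_space set \<Rightarrow> nat \<Rightarrow>
   (nat \<Rightarrow> complex \<times> complex \<Rightarrow> 'a) \<Rightarrow> ((real \<Rightarrow> 'a) \<Rightarrow> 'v \<Rightarrow> 'v) \<Rightarrow> (nat \<Rightarrow> 'v set) \<Rightarrow> bool" where
  "sheaf_data sc X r Phi A W \<longleftrightarrow>
     local_system_data sc X r Phi A \<and>
     (\<forall>s<r. module.subspace sc (W s) \<and>
        (\<exists>v. v \<notin> W s \<and> (\<forall>x. \<exists>a. x - sc a v \<in> W s)) \<and>
        (\<forall>p\<in>arc Phi s. \<forall>w\<in>W s. A (meridian Phi s p) w = w) \<and>
        (\<forall>p\<in>arc Phi s. A (longitude Phi s p) ` W s = W s))"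

text \<open>Reducedness, translated into the data (X is simply connected, so locally constant sheaves
  on X are constant; stalks of L_X at points of l_s - {*_s} are compared via the data):
  (1) no nonzero global section of F, i.e. no nonzero flat family of vectors lying in the W_s
      (equivalently no monomorphism L_X -> F with L_X \<noteq> 0);
  (2) no epimorphism F -> k_X, i.e. no flat family of linear functionals nonvanishing on each W_s
      (equivalently no epimorphism F -> L_X with L_X \<noteq> 0);
  (3) no direct summand F' of F which is the kernel of an epimorphism L_X -> i'_* k_{L''}, i.e.
      no decomposition V = V1 \<oplus> V2 preserved by transport and compatible with the W_s with
      V1 \<noteq> 0 having trivial monodromy.\<close>
definition reduced ::
  "('k::field \<Rightarrow> 'v::ab_group_add \<Rightarrow> 'v) \<Rightarrow> 'a::euclidean_space set \<Rightarrow> nat \<Rightarrow>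
   (nat \<Rightarrow> complex \<times> complex \<Rightarrow> 'a) \<Rightarrow> ((real \<Rightarrow> 'a) \<Rightarrow> 'v \<Rightarrow> 'v) \<Rightarrow> (nat \<Rightarrow> 'v set) \<Rightarrow> bool" where
  "reduced sc X r Phi A W \<longleftrightarrow>
     \<not> (\<exists>\<sigma>::'a \<Rightarrow> 'v.
          (\<exists>s<r. \<exists>p\<in>arc Phi s. \<sigma> p \<noteq> 0) \<and>
          (\<forall>s<r. \<forall>p\<in>arc Phi s. \<sigma> p \<in> W s) \<and>
          (\<forall>c. cord_path X r Phi c \<longrightarrow> A c (\<sigma> (pathfinish c)) = \<sigma> (pathstart c))) \<and>
     \<not> (\<exists>\<phi>::'a \<Rightarrow> 'v \<Rightarrow> 'k.
          (\<forall>s<r. \<forall>p\<in>arc Phi s. Vector_Spaces.linear sc (*) (\<phi> p) \<and> (\<exists>w\<in>W s. \<phi> p w \<noteq> 0)) \<and>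
          (\<forall>c. cord_path X r Phi c \<longrightarrow> \<phi> (pathstart c) \<circ> A c = \<phi> (pathfinish c))) \<and>
     \<not> (\<exists>V1 V2 :: 'a \<Rightarrow> 'v set.
          (\<forall>s<r. \<forall>p\<in>arc Phi s.
             module.subspace sc (V1 p) \<and> module.subspace sc (V2 p) \<and>
             V1 p \<inter> V2 p = {0} \<and> (\<forall>x. \<exists>y\<in>V1 p. \<exists>z\<in>V2 p. x = y + z) \<and>
             V1 p \<noteq> {0} \<and>
             (\<forall>x\<in>W s. \<exists>y\<in>V1 p \<inter> W s. \<exists>z\<in>V2 p \<inter> W s. x = y + z)) \<and>
          (\<forall>c. cord_path X r Phi c \<longrightarrow>
             A c ` V1 (pathfinish c) \<subseteq> V1 (pathstart c) \<and>
             A c ` V2 (pathfinish c) \<subseteq> V2 (pathstart c) \<and>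
             (pathstart c = pathfinish c \<longrightarrow> (\<forall>v\<in>V1 (pathfinish c). A c v = v))))"

definition local_trivialization ::
  "('k::field \<Rightarrow> 'v::ab_group_add \<Rightarrow> 'v) \<Rightarrow> nat \<Rightarrow> (nat \<Rightarrow> 'v set) \<Rightarrow> (nat \<Rightarrow> 'v \<Rightarrow> 'k) \<Rightarrow> bool" where
  "local_trivialization sc r W f \<longleftrightarrow>
     (\<forall>s<r. Vector_Spaces.linear sc (*) (f s) \<and> surj (f s) \<and> (\<forall>w\<in>W s. f s w = 0))"

definition right_inverses ::
  "('k::field \<Rightarrow> 'v::ab_group_add \<Rightarrow> 'v) \<Rightarrow> nat \<Rightarrow> (nat \<Rightarrow> 'v \<Rightarrow> 'k) \<Rightarrow> (nat \<Rightarrow> 'k \<Rightarrow> 'v) \<Rightarrow> bool" where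
  "right_inverses sc r f g \<longleftrightarrow>
     (\<forall>s<r. Vector_Spaces.linear (*) sc (g s) \<and> (\<forall>a. f s (g s a) = a))"

text \<open>The assignment epsilon on generators (maps k -> k identified with their value at 1).\<close>
definition eps_cord ::
  "((real \<Rightarrow> 'a::euclidean_space) \<Rightarrow> 'v::ab_group_add \<Rightarrow> 'v) \<Rightarrow> (nat \<Rightarrow> complex \<times> complex \<Rightarrow> 'a) \<Rightarrow>
   (nat \<Rightarrow> 'v \<Rightarrow> 'k::field) \<Rightarrow> (nat \<Rightarrow> 'k \<Rightarrow> 'v) \<Rightarrow> nat \<Rightarrow> nat \<Rightarrow> (real \<Rightarrow> 'a) \<Rightarrow> 'k" where
  "eps_cord A Phi f g s t c =
     f s (A c (g t 1 - A (meridian Phi t (pathfinish c)) (g t 1)))"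

definition eps_lambda ::
  "((real \<Rightarrow> 'a::euclidean_space) \<Rightarrow> 'v::ab_group_add \<Rightarrow> 'v) \<Rightarrow> (nat \<Rightarrow> complex \<times> complex \<Rightarrow> 'a) \<Rightarrow>
   (nat \<Rightarrow> 'v \<Rightarrow> 'k::field) \<Rightarrow> (nat \<Rightarrow> 'k \<Rightarrow> 'v) \<Rightarrow> nat \<Rightarrow> 'k" where
  "eps_lambda A Phi f g s = f s (A (longitude Phi s (base_point Phi s)) (g s 1))"

definition eps_mu ::
  "((real \<Rightarrow> 'a::euclidean_space) \<Rightarrow> 'v::ab_group_add \<Rightarrow> 'v) \<Rightarrow> (nat \<Rightarrow> complex \<times> complex \<Rightarrow> 'a) \<Rightarrow>
   (nat \<Rightarrow> 'v \<Rightarrow> 'k::field) \<Rightarrow> (nat \<Rightarrow> 'k \<Rightarrow> 'v) \<Rightarrow> nat \<Rightarrow> 'k" where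
  "eps_mu A Phi f g s = 1 - f s (g s 1 - A (meridian Phi s (base_point Phi s)) (g s 1))"

end

theory Submission
  imports Defs
begin

text \<open>All relations reduce to linear algebra on \<open>V = k g\<^sub>t \<oplus> W\<^sub>t\<close>, where \<open>g\<^sub>t = f\<^sub>t\<^sup>-\<^sup>1(1)\<close>
  and \<open>W\<^sub>t = ker f\<^sub>t\<close> (the corank-one subspace \<open>W\<^sub>t\<close> lies in the kernel of the surjection \<open>f\<^sub>t\<close>).
  Since the meridian monodromy \<open>M\<^sub>t\<close> fixes \<open>W\<^sub>t\<close>, every \<open>u\<close> satisfies
  \<open>u - M\<^sub>t u = f\<^sub>t(u) (g\<^sub>t - M\<^sub>t g\<^sub>t)\<close>: this is the skein relation, and it makes
  \<open>g\<^sub>t - M\<^sub>t g\<^sub>t\<close> an eigenvector of \<open>M\<^sub>t\<close> and of the longitude monodromy \<open>L\<^sub>t\<close>, which commutes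
  with \<open>M\<^sub>t\<close> on the boundary torus of \<open>K\<^sub>t\<close>.  Both monodromies preserve \<open>W\<^sub>t\<close>, so
  \<open>f\<^sub>t \<circ> M\<^sub>t\<close> and \<open>f\<^sub>t \<circ> L\<^sub>t\<close> are multiples of \<open>f\<^sub>t\<close>, with nonzero factors because the
  monodromies are injective and \<open>g\<^sub>t \<notin> W\<^sub>t\<close>.  The topological input is that parallel transport
  is invariant under homotopies whose endpoints slide along the punctured framing curves, where
  transport is trivial; so homotopic cords have equal values, and the transport around a meridian
  or longitude does not depend on its base point.\<close>

section \<open>Homotopies of the unit square\<close>

lemma homotopic_paths_square_boundary:
  fixes h :: "real \<times> real \<Rightarrow> 'a::real_normed_vector"
  assumes conth: "continuous_on ({0..1}\<times>{0..1}) h" and hs: "h \<in> ({0..1}\<times>{0..1}) \<rightarrow> S"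
  shows "homotopic_paths S (\<lambda>x. h(0,x))
           ((\<lambda>u. h(u,0)) +++ ((\<lambda>x. h(1,x)) +++ reversepath (\<lambda>u. h(u,1))))"
proof -
  let ?A = "{0..1::real} \<times> {0..1::real}"
  define c where "c = (\<lambda>x. h(0,x))"
  let ?c' = "linepath (c 0) (c 0) +++ (c +++ linepath (c 1) (c 1))"
  have pc: "path c" unfolding c_def path_def
    by (rule continuous_on_compose2[OF conth]) (auto intro!: continuous_intros)
  have ic: "path_image c \<subseteq> S" using hs by (auto simp: c_def path_image_def)
  have padded: "homotopic_paths S c ?c'"
  proof -
    have "homotopic_paths S (c +++ linepath (c 1) (c 1)) c"
      using homotopic_paths_rid[OF pc ic] by (simp add: pathfinish_def)
    moreover have "homotopic_paths S ?c' (c +++ linepath (c 1) (c 1))"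
    proof (rule homotopic_paths_lid')
      show "path (c +++ linepath (c 1) (c 1))" using pc by (simp add: pathfinish_def)
      show "path_image (c +++ linepath (c 1) (c 1)) \<subseteq> S"
        using ic by (subst path_image_join) (auto simp: pathfinish_def pathstart_def path_image_def)
    qed (simp add: pathstart_def joinpaths_def)
    ultimately show ?thesis using homotopic_paths_trans homotopic_paths_sym by blast
  qed
  have c1: "continuous_on ?A (\<lambda>y. h (fst y * snd y, 0))"
    by (rule continuous_on_compose2[OF conth]) (auto intro!: continuous_intros simp: mult_le_one)
  have "a - a * b \<in> {0..1}" if "a \<in> {0..1}" "b \<in> {0..1}" for a b :: real
  proof -
    have "0 \<le> a * b" "a * b \<le> a" using that by (auto simp: mult_left_le)
    then show ?thesis using that by auto
  qed
  then have c2: "continuous_on ?A (\<lambda>y. h (fst y - fst y * snd y, 1))"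
    by (intro continuous_on_compose2[OF conth]) (auto intro!: continuous_intros)
  \<comment> \<open>At time \<open>a\<close>: run along the bottom edge up to \<open>a\<close>, up the vertical segment at \<open>a\<close>, back along the top.\<close>
  let ?K = "\<lambda>y. (subpath 0 (fst y) (\<lambda>u. h(u,0)) +++
                 ((\<lambda>u. h(fst y, u)) +++ subpath (fst y) 0 (\<lambda>u. h(u,1)))) (snd y)"
  have "homotopic_paths S ?c' ((\<lambda>u. h(u,0)) +++ ((\<lambda>x. h(1,x)) +++ reversepath (\<lambda>u. h(u,1))))"
    unfolding homotopic_paths
  proof (intro exI conjI ballI)
    have "continuous_on ?A (\<lambda>y. ((\<lambda>u. h(fst y, u)) +++ subpath (fst y) 0 (\<lambda>u. h(u,1))) (snd y))"
      by (rule continuous_on_homotopic_join_lemma)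
         (use c2 conth in \<open>auto simp: subpath_def pathstart_def pathfinish_def\<close>)
    then show "continuous_on ?A ?K"
      by (intro continuous_on_homotopic_join_lemma)
         (use c1 c2 conth in \<open>auto simp: subpath_def pathstart_def pathfinish_def joinpaths_def\<close>)
    show "?K \<in> ?A \<rightarrow> S"
    proof
      fix y assume "y \<in> ?A"
      then obtain a b where y: "y = (a,b)" "0\<le>a" "a\<le>1" "0\<le>b" "b\<le>1" by auto
      have h_in_S: "\<And>u v. 0\<le>u \<Longrightarrow> u\<le>1 \<Longrightarrow> 0\<le>v \<Longrightarrow> v\<le>1 \<Longrightarrow> h(u,v) \<in> S" using hs by auto
      have "0 \<le> a * (4 - 4*b) \<and> a * (4 - 4*b) \<le> 1" if "\<not> 2*b - 1 \<le> 1/2"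
        using y that by (simp add: mult_le_one)
      moreover have "(0 - a) * (2 * (2 * b - 1) - 1) + a = a * (4 - 4*b)"
        by (simp add: algebra_simps)
      ultimately show "?K y \<in> S"
        using y by (auto simp: joinpaths_def subpath_def mult_le_one intro!: h_in_S)
    qed
  qed (simp_all add: subpath_refl reversepath_def c_def pathstart_def pathfinish_def
                     joinpaths_def subpath_def)
  then show ?thesis using homotopic_paths_trans[OF padded] by (simp add: c_def)
qed

section \<open>Geometry of the framed link\<close>

lemma unit_circle_minus_one_eq_cis_image:
  "{z. norm z = 1 \<and> z \<noteq> 1} = cis ` {0<..<2*pi}"
proof (intro equalityI subsetI)
  fix z :: complex assume "z \<in> {z. norm z = 1 \<and> z \<noteq> 1}"
  then have z: "norm z = 1" "z \<noteq> 1" by auto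
  have arg: "0 \<le> Arg2pi z \<and> Arg2pi z < 2*pi \<and> is_Arg z (Arg2pi z)" by (rule Arg2pi)
  then have "z = cis (Arg2pi z)" using z by (simp add: is_Arg_def cis_conv_exp)
  moreover from this have "Arg2pi z \<noteq> 0" using z by auto
  ultimately show "z \<in> cis ` {0<..<2*pi}" using arg by force
next
  fix z :: complex assume "z \<in> cis ` {0<..<2*pi}"
  then obtain \<phi> where \<phi>: "0 < \<phi>" "\<phi> < 2*pi" "z = cis \<phi>" by auto
  have "Arg2pi (exp (\<i> * complex_of_real \<phi>)) = \<phi>" using \<phi> by (subst Arg2pi_exp) auto
  then have "cis \<phi> \<noteq> 1" using \<phi> by (auto simp: cis_conv_exp Arg2pi_of_real[of 1, simplified])
  then show "z \<in> {z. norm z = 1 \<and> z \<noteq> 1}" using \<phi> by simp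
qed

lemma mem_solid_torus [simp]: "(a, b) \<in> solid_torus \<longleftrightarrow> norm a = 1 \<and> norm b \<le> 1"
  by (simp add: solid_torus_def)

lemma framed_link_inj:
  assumes "framed_link X r Phi" "s < r" "a \<in> solid_torus" "b \<in> solid_torus" "Phi s a = Phi s b"
  shows "a = b"
  using assms unfolding framed_link_def inj_on_def by blast

lemma framed_link_continuous_on_compose:
  assumes "framed_link X r Phi" "s < r" "continuous_on D q" "q ` D \<subseteq> solid_torus"
  shows "continuous_on D (\<lambda>x. Phi s (q x))"
  using assms continuous_on_compose2[of solid_torus "Phi s" D q] by (auto simp: framed_link_def)

lemma framed_link_in_complement:
  assumes fl: "framed_link X r Phi" and s: "s < r"
    and "norm \<theta> = 1" "norm \<rho> \<le> 1" "\<rho> \<noteq> 0"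
  shows "Phi s (\<theta>, \<rho>) \<in> X - link_set r Phi"
proof -
  have T: "(\<theta>, \<rho>) \<in> solid_torus" using assms by simp
  have "Phi s (\<theta>, \<rho>) \<notin> Phi s' ` (sphere 0 1 \<times> {0})" if s': "s' < r" for s'
  proof (cases "s' = s")
    case True
    then show ?thesis using framed_link_inj[OF fl s T] \<open>\<rho> \<noteq> 0\<close> by force
  next
    case False
    then have "Phi s ` solid_torus \<inter> Phi s' ` solid_torus = {}"
      using fl s s' unfolding framed_link_def by metis
    then show ?thesis using T by (force simp: solid_torus_def)
  qed
  moreover have "Phi s (\<theta>, \<rho>) \<in> X" using fl s T unfolding framed_link_def by blast
  ultimately show ?thesis by (auto simp: link_set_def)
qed

lemma arc_eq_image_angles:
  assumes fl: "framed_link X r Phi" and s: "s < r"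
  shows "arc Phi s = (\<lambda>\<phi>. Phi s (cis \<phi>, 1/2)) ` {0<..<2*pi}"
proof -
  have "arc Phi s = (\<lambda>\<theta>. Phi s (\<theta>, 1/2)) ` {\<theta>. norm \<theta> = 1 \<and> \<theta> \<noteq> 1}"
    using framed_link_inj[OF fl s, of "(_, 1/2)" "(1, 1/2)"]
    by (auto simp: arc_def framing_curve_def marked_point_def)
  then show ?thesis by (simp add: unit_circle_minus_one_eq_cis_image image_image)
qed

lemma arc_subset_complement:
  assumes "framed_link X r Phi" "s < r"
  shows "arc Phi s \<subseteq> X - link_set r Phi"
  using framed_link_in_complement[OF assms] by (auto simp: arc_eq_image_angles[OF assms])

lemma base_point_eq_cis_pi: "base_point Phi s = Phi s (cis pi, 1/2)"
  by (simp add: base_point_def)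

lemma base_point_in_arc:
  assumes "framed_link X r Phi" "s < r"
  shows "base_point Phi s \<in> arc Phi s"
  unfolding arc_eq_image_angles[OF assms] base_point_eq_cis_pi
  by (rule image_eqI[of _ _ pi]) auto

definition torus_loop ::
  "(nat \<Rightarrow> complex \<times> complex \<Rightarrow> 'a) \<Rightarrow> nat \<Rightarrow> (real \<Rightarrow> complex \<times> complex) \<Rightarrow> complex \<Rightarrow> real \<Rightarrow> 'a"
  where "torus_loop Phi s \<gamma> \<theta> = (\<lambda>t. Phi s (\<theta> * fst (\<gamma> t), snd (\<gamma> t)))"

definition torus_profile :: "(real \<Rightarrow> complex \<times> complex) \<Rightarrow> bool" where
  "torus_profile \<gamma> \<longleftrightarrow> path \<gamma> \<and> path_image \<gamma> \<subseteq> sphere 0 1 \<times> (cball 0 1 - {0}) \<and>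
     \<gamma> 0 = (1, 1/2) \<and> \<gamma> 1 = (1, 1/2)"

lemma torus_profile_meridian: "torus_profile (\<lambda>t. (1, cis (2*pi*t) / 2))"
  by (auto simp: torus_profile_def path_def path_image_def norm_divide intro!: continuous_intros)

lemma torus_profile_longitude: "torus_profile (\<lambda>t. (cis (2*pi*t), 1/2))"
  by (auto simp: torus_profile_def path_def path_image_def intro!: continuous_intros)

lemma meridian_eq_torus_loop:
  assumes "framed_link X r Phi" "s < r" "norm \<theta> = 1"
  shows "meridian Phi s (Phi s (\<theta>, 1/2)) = torus_loop Phi s (\<lambda>t. (1, cis (2*pi*t) / 2)) \<theta>"
  using assms inv_into_f_f[of "Phi s" solid_torus "(\<theta>, 1/2)"]
  by (simp add: meridian_def torus_loop_def framed_link_def)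

lemma longitude_eq_torus_loop:
  assumes "framed_link X r Phi" "s < r" "norm \<theta> = 1"
  shows "longitude Phi s (Phi s (\<theta>, 1/2)) = torus_loop Phi s (\<lambda>t. (cis (2*pi*t), 1/2)) \<theta>"
  using assms inv_into_f_f[of "Phi s" solid_torus "(\<theta>, 1/2)"]
  by (simp add: longitude_def torus_loop_def framed_link_def)

lemma framed_cord_torus_loop:
  assumes fl: "framed_link X r Phi" and s: "s < r" and \<gamma>: "torus_profile \<gamma>"
    and "\<phi> \<in> {0<..<2*pi}"
  shows "framed_cord X r Phi s s (torus_loop Phi s \<gamma> (cis \<phi>))"
    and "pathstart (torus_loop Phi s \<gamma> (cis \<phi>)) = Phi s (cis \<phi>, 1/2)"
    and "pathfinish (torus_loop Phi s \<gamma> (cis \<phi>)) = Phi s (cis \<phi>, 1/2)"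
proof -
  have img: "norm (fst (\<gamma> t)) = 1 \<and> norm (snd (\<gamma> t)) \<le> 1 \<and> snd (\<gamma> t) \<noteq> 0" if "t \<in> {0..1}" for t
    using \<gamma> that by (force simp: torus_profile_def path_image_def)
  show start: "pathstart (torus_loop Phi s \<gamma> (cis \<phi>)) = Phi s (cis \<phi>, 1/2)"
    and "pathfinish (torus_loop Phi s \<gamma> (cis \<phi>)) = Phi s (cis \<phi>, 1/2)"
    using \<gamma> by (simp_all add: torus_profile_def torus_loop_def pathstart_def pathfinish_def)
  have "path (torus_loop Phi s \<gamma> (cis \<phi>))"
    unfolding torus_loop_def path_def
    using \<gamma> img by (intro framed_link_continuous_on_compose[OF fl s])
      (auto simp: torus_profile_def path_def norm_mult intro!: continuous_intros)
  moreover have "path_image (torus_loop Phi s \<gamma> (cis \<phi>)) \<subseteq> X - link_set r Phi"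
    using img framed_link_in_complement[OF fl s]
    by (auto simp: torus_loop_def path_image_def norm_mult)
  moreover have "Phi s (cis \<phi>, 1/2) \<in> arc Phi s"
    using assms(4) by (auto simp: arc_eq_image_angles[OF fl s])
  ultimately show "framed_cord X r Phi s s (torus_loop Phi s \<gamma> (cis \<phi>))"
    using s start \<open>pathfinish _ = _\<close> by (simp add: framed_cord_def)
qed

lemma framed_cord_meridian:
  assumes fl: "framed_link X r Phi" and s: "s < r" and p: "p \<in> arc Phi s"
  shows "framed_cord X r Phi s s (meridian Phi s p)"
    and "pathstart (meridian Phi s p) = p" and "pathfinish (meridian Phi s p) = p"
proof -
  obtain \<phi> where \<phi>: "\<phi> \<in> {0<..<2*pi}" and p_eq: "p = Phi s (cis \<phi>, 1/2)"
    using p by (auto simp: arc_eq_image_angles[OF fl s])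
  note loop = framed_cord_torus_loop[OF fl s torus_profile_meridian \<phi>]
  show "framed_cord X r Phi s s (meridian Phi s p)"
    and "pathstart (meridian Phi s p) = p" and "pathfinish (meridian Phi s p) = p"
    using loop by (simp_all add: p_eq meridian_eq_torus_loop[OF fl s])
qed

lemma framed_cord_longitude:
  assumes fl: "framed_link X r Phi" and s: "s < r" and p: "p \<in> arc Phi s"
  shows "framed_cord X r Phi s s (longitude Phi s p)"
    and "pathstart (longitude Phi s p) = p" and "pathfinish (longitude Phi s p) = p"
proof -
  obtain \<phi> where \<phi>: "\<phi> \<in> {0<..<2*pi}" and p_eq: "p = Phi s (cis \<phi>, 1/2)"
    using p by (auto simp: arc_eq_image_angles[OF fl s])
  note loop = framed_cord_torus_loop[OF fl s torus_profile_longitude \<phi>]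
  show "framed_cord X r Phi s s (longitude Phi s p)"
    and "pathstart (longitude Phi s p) = p" and "pathfinish (longitude Phi s p) = p"
    using loop by (simp_all add: p_eq longitude_eq_torus_loop[OF fl s])
qed

lemma framed_cord_join:
  assumes "framed_cord X r Phi s k c" "framed_cord X r Phi k' t d" "pathfinish c = pathstart d"
  shows "framed_cord X r Phi s t (c +++ d)"
  using assms by (auto simp: framed_cord_def path_image_join)

lemma framed_cord_reversepath:
  "framed_cord X r Phi s t c \<Longrightarrow> framed_cord X r Phi t s (reversepath c)"
  by (auto simp: framed_cord_def)

lemma framed_cord_within_arc:
  assumes "framed_link X r Phi" "s < r" "path c" "path_image c \<subseteq> arc Phi s"
  shows "framed_cord X r Phi s s c"
  using assms arc_subset_complement[OF assms(1,2)] pathstart_in_path_image[of c]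
    pathfinish_in_path_image[of c]
  by (auto simp: framed_cord_def)

section \<open>Parallel transport in the link complement\<close>

locale cord_transport =
  fixes sc :: "'k::field \<Rightarrow> 'v::ab_group_add \<Rightarrow> 'v"
    and X :: "'a::euclidean_space set" and r :: nat
    and Phi :: "nat \<Rightarrow> complex \<times> complex \<Rightarrow> 'a"
    and A :: "(real \<Rightarrow> 'a) \<Rightarrow> 'v \<Rightarrow> 'v"
  assumes framed_link: "framed_link X r Phi"
    and local_system: "local_system_data sc X r Phi A"
begin

lemma transport_linear: "framed_cord X r Phi s t c \<Longrightarrow> Vector_Spaces.linear sc sc (A c)"
  using local_system unfolding local_system_data_def cord_path_def by blast

lemma transport_join:
  assumes "framed_cord X r Phi s k c" "framed_cord X r Phi k' t d" "pathfinish c = pathstart d"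
  shows "A (c +++ d) = A c \<circ> A d"
  using local_system assms unfolding local_system_data_def cord_path_def by blast

lemma transport_homotopic:
  assumes "framed_cord X r Phi s t c" "framed_cord X r Phi s' t' d"
    and "homotopic_paths (X - link_set r Phi) c d"
  shows "A c = A d"
  using local_system assms unfolding local_system_data_def cord_path_def by blast

lemma transport_within_arc:
  assumes "s < r" "path c" "path_image c \<subseteq> arc Phi s"
  shows "A c = id"
  using local_system assms unfolding local_system_data_def by blast

lemma transport_reversepath_inverse:
  assumes c: "framed_cord X r Phi s t c"
  shows "A (reversepath c) \<circ> A c = id"
proof -
  have t: "t < r" and fin: "pathfinish c \<in> arc Phi t" using c by (auto simp: framed_cord_def)
  let ?e = "linepath (pathfinish c) (pathfinish c)"
  have e: "framed_cord X r Phi t t ?e"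
    by (rule framed_cord_within_arc[OF framed_link t]) (use fin in auto)
  have "homotopic_paths (X - link_set r Phi) (reversepath c +++ c) ?e"
    using c by (intro homotopic_paths_linv) (auto simp: framed_cord_def)
  then have "A (reversepath c +++ c) = A ?e"
    using framed_cord_join[OF framed_cord_reversepath[OF c] c] e
    by (intro transport_homotopic) auto
  also have "\<dots> = id" by (rule transport_within_arc[OF t]) (use fin in auto)
  finally show ?thesis using transport_join[OF framed_cord_reversepath[OF c] c] by simp
qed

lemma transport_inj: "framed_cord X r Phi s t c \<Longrightarrow> inj (A c)"
  using transport_reversepath_inverse by (metis inj_on_inverseI comp_apply id_apply)

text \<open>Transport is invariant under homotopies whose endpoints slide along the punctured framing
  curves: the sliding paths lie in the arcs, where transport is trivial.\<close>
lemma transport_square: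
  fixes h :: "real \<times> real \<Rightarrow> 'a"
  assumes s: "s < r" and t: "t < r"
    and conth: "continuous_on ({0..1}\<times>{0..1}) h"
    and hs: "h \<in> ({0..1}\<times>{0..1}) \<rightarrow> X - link_set r Phi"
    and ends: "\<And>u. u \<in> {0..1} \<Longrightarrow> h (u,0) \<in> arc Phi s \<and> h (u,1) \<in> arc Phi t"
    and c: "framed_cord X r Phi s t c" and d: "framed_cord X r Phi s t d"
    and hc: "\<And>x. x \<in> {0..1} \<Longrightarrow> h (0,x) = c x"
    and hd: "\<And>x. x \<in> {0..1} \<Longrightarrow> h (1,x) = d x"
  shows "A c = A d"
proof -
  define \<alpha> \<beta> c' d' where "\<alpha> = (\<lambda>u. h (u,0))" and "\<beta> = (\<lambda>u. h (u,1))"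
    and "c' = (\<lambda>x. h (0,x))" and "d' = (\<lambda>x. h (1,x))"
  have paths: "path \<alpha>" "path \<beta>" "path c'" "path d'"
    unfolding \<alpha>_def \<beta>_def c'_def d'_def path_def
    by (auto intro!: continuous_on_compose2[OF conth] continuous_intros)
  have i\<alpha>: "path_image \<alpha> \<subseteq> arc Phi s" and i\<beta>: "path_image \<beta> \<subseteq> arc Phi t"
    using ends by (auto simp: path_image_def \<alpha>_def \<beta>_def)
  have c': "framed_cord X r Phi s t c'" and d': "framed_cord X r Phi s t d'"
    using c d paths hs hc hd
    by (auto simp: framed_cord_def path_image_def c'_def d'_def pathstart_def pathfinish_def)
  have "A c = A c'"
    by (rule transport_homotopic[OF c c'])
       (use c hc in \<open>auto simp: framed_cord_def c'_def intro!: homotopic_paths_eq\<close>)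
  have "A d' = A d"
    by (rule transport_homotopic[OF d' d])
       (use d' hd in \<open>auto simp: framed_cord_def d'_def intro!: homotopic_paths_eq\<close>)
  have a: "framed_cord X r Phi s s \<alpha>" by (rule framed_cord_within_arc[OF framed_link s paths(1) i\<alpha>])
  have b: "framed_cord X r Phi t t (reversepath \<beta>)"
    by (rule framed_cord_within_arc[OF framed_link t]) (use paths i\<beta> in auto)
  have j1: "pathfinish d' = pathstart (reversepath \<beta>)"
    and j2: "pathfinish \<alpha> = pathstart (d' +++ reversepath \<beta>)"
    by (simp_all add: d'_def \<alpha>_def \<beta>_def pathfinish_def pathstart_def reversepath_def joinpaths_def)
  have db: "framed_cord X r Phi s t (d' +++ reversepath \<beta>)" by (rule framed_cord_join[OF d' b j1])
  have "A c' = A (\<alpha> +++ (d' +++ reversepath \<beta>))"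
    by (rule transport_homotopic[OF c' framed_cord_join[OF a db j2]])
       (unfold c'_def \<alpha>_def d'_def \<beta>_def, rule homotopic_paths_square_boundary[OF conth hs])
  also have "\<dots> = A \<alpha> \<circ> (A d' \<circ> A (reversepath \<beta>))"
    using transport_join[OF a db j2] transport_join[OF d' b j1] by simp
  also have "A \<alpha> = id" by (rule transport_within_arc[OF s paths(1) i\<alpha>])
  also have "A (reversepath \<beta>) = id" by (rule transport_within_arc[OF t]) (use paths i\<beta> in auto)
  finally show ?thesis using \<open>A c = A c'\<close> \<open>A d' = A d\<close> by simp
qed

lemma transport_framed_homotopic:
  assumes c: "framed_cord X r Phi s t c" and d: "framed_cord X r Phi s t d"
    and "framed_cord_homotopic X r Phi s t c d"
  shows "A c = A d"
proof -
  have s: "s < r" and t: "t < r" using c by (auto simp: framed_cord_def)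
  obtain h :: "real \<times> real \<Rightarrow> 'a" where
    "continuous_on ({0..1}\<times>{0..1}) h" "h \<in> {0..1}\<times>{0..1} \<rightarrow> X - link_set r Phi"
    "\<forall>x\<in>{0..1}. h (0,x) = c x" "\<forall>x\<in>{0..1}. h (1,x) = d x"
    "\<forall>u\<in>{0..1}. h (u,0) \<in> arc Phi s \<and> h (u,1) \<in> arc Phi t"
    using assms(3) unfolding framed_cord_homotopic_def
    by (auto simp: homotopic_with pathstart_def pathfinish_def image_subset_iff_funcset)
  then show ?thesis by (intro transport_square[OF s t _ _ _ c d]) auto
qed

lemma transport_torus_loop_angle_independent:
  assumes s: "s < r" and \<gamma>: "torus_profile \<gamma>"
    and \<phi>: "\<phi> \<in> {0<..<2*pi}" and \<psi>: "\<psi> \<in> {0<..<2*pi}"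
  shows "A (torus_loop Phi s \<gamma> (cis \<phi>)) = A (torus_loop Phi s \<gamma> (cis \<psi>))"
proof -
  define \<omega> where "\<omega> u = (1 - u) * \<phi> + u * \<psi>" for u
  have \<omega>: "\<omega> u \<in> {0<..<2*pi}" if "u \<in> {0..1}" for u
    using convex_alt[THEN iffD1, OF convex_real_interval(8), rule_format, of \<phi> 0 "2*pi" \<psi> u]
      \<phi> \<psi> that by (simp add: \<omega>_def)
  have img: "norm (fst (\<gamma> x)) = 1 \<and> norm (snd (\<gamma> x)) \<le> 1 \<and> snd (\<gamma> x) \<noteq> 0" if "x \<in> {0..1}" for x
    using \<gamma> that by (force simp: torus_profile_def path_image_def)
  define h where "h y = Phi s (cis (\<omega> (fst y)) * fst (\<gamma> (snd y)), snd (\<gamma> (snd y)))" for y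
  show ?thesis
  proof (rule transport_square[OF s s])
    have "continuous_on ({0..1}\<times>{0..1}) (\<lambda>y. \<gamma> (snd y))"
      using \<gamma> unfolding torus_profile_def path_def
      by (intro continuous_on_compose2[of "{0..1}" \<gamma> _ snd] continuous_on_snd continuous_on_id) auto
    then have "continuous_on ({0..1}\<times>{0..1})
        (\<lambda>y. (cis (\<omega> (fst y)) * fst (\<gamma> (snd y)), snd (\<gamma> (snd y))))"
      unfolding \<omega>_def by (intro continuous_intros) auto
    moreover have "(\<lambda>y. (cis (\<omega> (fst y)) * fst (\<gamma> (snd y)), snd (\<gamma> (snd y)))) ` ({0..1}\<times>{0..1})
        \<subseteq> solid_torus"
      using img by (auto simp: norm_mult)
    ultimately show "continuous_on ({0..1}\<times>{0..1}) h"
      unfolding h_def by (rule framed_link_continuous_on_compose[OF framed_link s])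
    show "h \<in> {0..1}\<times>{0..1} \<rightarrow> X - link_set r Phi"
    proof
      fix y :: "real \<times> real" assume "y \<in> {0..1}\<times>{0..1}"
      then have "norm (fst (\<gamma> (snd y))) = 1 \<and> norm (snd (\<gamma> (snd y))) \<le> 1 \<and> snd (\<gamma> (snd y)) \<noteq> 0"
        by (intro img) auto
      then show "h y \<in> X - link_set r Phi"
        unfolding h_def by (intro framed_link_in_complement[OF framed_link s]) (auto simp: norm_mult)
    qed
    show "h (u,0) \<in> arc Phi s \<and> h (u,1) \<in> arc Phi s" if "u \<in> {0..1}" for u
      unfolding arc_eq_image_angles[OF framed_link s]
      using \<gamma> \<omega>[OF that] by (auto simp: h_def torus_profile_def intro!: image_eqI[of _ _ "\<omega> u"])
    show "framed_cord X r Phi s s (torus_loop Phi s \<gamma> (cis \<phi>))"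
      and "framed_cord X r Phi s s (torus_loop Phi s \<gamma> (cis \<psi>))"
      using framed_cord_torus_loop(1)[OF framed_link s \<gamma>] \<phi> \<psi> by auto
    show "h (0,x) = torus_loop Phi s \<gamma> (cis \<phi>) x" and "h (1,x) = torus_loop Phi s \<gamma> (cis \<psi>) x" for x
      by (simp_all add: h_def \<omega>_def torus_loop_def)
  qed
qed

definition meridian_monodromy :: "nat \<Rightarrow> 'v \<Rightarrow> 'v" where
  "meridian_monodromy s = A (meridian Phi s (base_point Phi s))"

definition longitude_monodromy :: "nat \<Rightarrow> 'v \<Rightarrow> 'v" where
  "longitude_monodromy s = A (longitude Phi s (base_point Phi s))"

lemma transport_meridian:
  assumes s: "s < r" and p: "p \<in> arc Phi s"
  shows "A (meridian Phi s p) = meridian_monodromy s"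
proof -
  obtain \<phi> where \<phi>: "\<phi> \<in> {0<..<2*pi}" and p_eq: "p = Phi s (cis \<phi>, 1/2)"
    using p by (auto simp: arc_eq_image_angles[OF framed_link s])
  show ?thesis
    unfolding meridian_monodromy_def base_point_eq_cis_pi p_eq
      meridian_eq_torus_loop[OF framed_link s norm_cis]
    by (rule transport_torus_loop_angle_independent[OF s torus_profile_meridian \<phi>]) simp
qed

lemma transport_longitude:
  assumes s: "s < r" and p: "p \<in> arc Phi s"
  shows "A (longitude Phi s p) = longitude_monodromy s"
proof -
  obtain \<phi> where \<phi>: "\<phi> \<in> {0<..<2*pi}" and p_eq: "p = Phi s (cis \<phi>, 1/2)"
    using p by (auto simp: arc_eq_image_angles[OF framed_link s])
  show ?thesis
    unfolding longitude_monodromy_def base_point_eq_cis_pi p_eq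
      longitude_eq_torus_loop[OF framed_link s norm_cis]
    by (rule transport_torus_loop_angle_independent[OF s torus_profile_longitude \<phi>]) simp
qed

text \<open>The boundary torus of the tubular neighbourhood gives the relation \<open>m \<simeq> l m l\<^sup>-\<^sup>1\<close>.\<close>
lemma meridian_longitude_monodromy_commute:
  assumes s: "s < r"
  shows "meridian_monodromy s \<circ> longitude_monodromy s = longitude_monodromy s \<circ> meridian_monodromy s"
proof -
  define m l where "m = meridian Phi s (base_point Phi s)" and "l = longitude Phi s (base_point Phi s)"
  have bp: "base_point Phi s \<in> arc Phi s" by (rule base_point_in_arc[OF framed_link s])
  have mc: "framed_cord X r Phi s s m" "pathstart m = base_point Phi s" "pathfinish m = base_point Phi s"
    unfolding m_def by (rule framed_cord_meridian[OF framed_link s bp])+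
  have lc: "framed_cord X r Phi s s l" "pathstart l = base_point Phi s" "pathfinish l = base_point Phi s"
    unfolding l_def by (rule framed_cord_longitude[OF framed_link s bp])+
  define h where "h y = Phi s (- cis (2*pi * fst y), cis (2*pi * snd y) / 2)" for y :: "real \<times> real"
  have "continuous_on ({0..1}\<times>{0..1}) h" unfolding h_def
    by (rule framed_link_continuous_on_compose[OF framed_link s])
       (auto intro!: continuous_intros simp: norm_divide)
  moreover have "h \<in> {0..1}\<times>{0..1} \<rightarrow> X - link_set r Phi"
    unfolding h_def using framed_link_in_complement[OF framed_link s] by (auto simp: norm_divide)
  moreover have "(\<lambda>x. h(0,x)) = m" "(\<lambda>x. h(1,x)) = m"
    unfolding m_def base_point_def meridian_eq_torus_loop[OF framed_link s, of "-1", simplified]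
    by (simp_all add: h_def torus_loop_def)
  moreover have "(\<lambda>u. h(u,0)) = l" "(\<lambda>u. h(u,1)) = l"
    unfolding l_def base_point_def longitude_eq_torus_loop[OF framed_link s, of "-1", simplified]
    by (simp_all add: h_def torus_loop_def)
  ultimately have hom: "homotopic_paths (X - link_set r Phi) m (l +++ (m +++ reversepath l))"
    using homotopic_paths_square_boundary[of h] by metis
  have rl: "framed_cord X r Phi s s (reversepath l)" by (rule framed_cord_reversepath[OF lc(1)])
  have j1: "pathfinish m = pathstart (reversepath l)" and j2: "pathfinish l = pathstart (m +++ reversepath l)"
    using mc lc by simp_all
  have mrl: "framed_cord X r Phi s s (m +++ reversepath l)" by (rule framed_cord_join[OF mc(1) rl j1])
  have "A m = A (l +++ (m +++ reversepath l))"
    by (rule transport_homotopic[OF mc(1) framed_cord_join[OF lc(1) mrl j2] hom])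
  also have "\<dots> = A l \<circ> A m \<circ> A (reversepath l)"
    using transport_join[OF lc(1) mrl j2] transport_join[OF mc(1) rl j1] by (simp add: o_assoc)
  finally have "A m \<circ> A l = A l \<circ> A m \<circ> (A (reversepath l) \<circ> A l)" by (simp add: o_assoc)
  also have "A (reversepath l) \<circ> A l = id" by (rule transport_reversepath_inverse[OF lc(1)])
  finally show ?thesis by (simp add: meridian_monodromy_def longitude_monodromy_def m_def l_def comp_def)
qed

lemma monodromy_linear:
  assumes "s < r"
  shows "Vector_Spaces.linear sc sc (meridian_monodromy s)"
    and "Vector_Spaces.linear sc sc (longitude_monodromy s)"
  using transport_linear framed_cord_meridian framed_cord_longitude base_point_in_arc framed_link assms
  unfolding meridian_monodromy_def longitude_monodromy_def by metis+

lemma monodromy_inj: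
  assumes "s < r"
  shows "inj (meridian_monodromy s)" and "inj (longitude_monodromy s)"
  using transport_inj framed_cord_meridian framed_cord_longitude base_point_in_arc framed_link assms
  unfolding meridian_monodromy_def longitude_monodromy_def by metis+

end

section \<open>Linear functionals with a codimension-one kernel\<close>

lemma inj_not_mem_if_subset_image:
  assumes "inj T" "K \<subseteq> T ` K" "x \<notin> K"
  shows "T x \<notin> K"
  using assms by (metis imageE inj_eq subsetD)

context vector_space
begin

lemma functional_eq_0_iff_codim_one:
  assumes f: "Vector_Spaces.linear scale (*) f" "surj f" "\<And>w. w \<in> W \<Longrightarrow> f w = 0"
    and v: "\<And>x. \<exists>a. x - scale a v \<in> W"
  shows "f x = 0 \<longleftrightarrow> x \<in> W"
proof
  interpret f: Vector_Spaces.linear scale "(*)" f by (rule f(1))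
  have decomp: "f y = a * f v" if "y - scale a v \<in> W" for y a
    using f(3)[OF that] by (simp add: f.diff f.scale)
  obtain y where "f y = 1" using f(2) by (metis surjD)
  moreover obtain a where "y - scale a v \<in> W" using v by blast
  ultimately have "f v \<noteq> 0" using decomp by force
  assume "f x = 0"
  moreover obtain b where b: "x - scale b v \<in> W" using v by blast
  ultimately have "b = 0" using decomp \<open>f v \<noteq> 0\<close> by force
  then show "x \<in> W" using b by simp
qed (rule f(3))

lemma functional_comp_eq_mult:
  assumes f: "Vector_Spaces.linear scale (*) f" and g: "f g = 1"
    and T: "Vector_Spaces.linear scale scale T" and ker: "\<And>x. f x = 0 \<Longrightarrow> f (T x) = 0"
  shows "f (T x) = f x * f (T g)"
proof -
  interpret f: Vector_Spaces.linear scale "(*)" f by (rule f)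
  interpret T: Vector_Spaces.linear scale scale T by (rule T)
  have "f (T (x - scale (f x) g)) = 0" by (rule ker) (simp add: f.diff f.scale g)
  then show ?thesis by (simp add: T.diff T.scale f.diff f.scale)
qed

text \<open>Writing \<open>u = f u \<cdot> g + w\<close> with \<open>f w = 0\<close>, the part \<open>w\<close> is fixed by \<open>M\<close>.\<close>
lemma diff_eq_scale_if_fixes_kernel:
  assumes f: "Vector_Spaces.linear scale (*) f" and g: "f g = 1"
    and M: "Vector_Spaces.linear scale scale M" and fixes_kernel: "\<And>x. f x = 0 \<Longrightarrow> M x = x"
  shows "u - M u = scale (f u) (g - M g)"
proof -
  interpret f: Vector_Spaces.linear scale "(*)" f by (rule f)
  interpret M: Vector_Spaces.linear scale scale M by (rule M)
  have "M (u - scale (f u) g) = u - scale (f u) g"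
    by (rule fixes_kernel) (simp add: f.diff f.scale g)
  then have "M u - scale (f u) (M g) = u - scale (f u) g" by (simp add: M.diff M.scale)
  then show ?thesis by (simp add: scale_right_diff_distrib algebra_simps)
qed

lemma commuting_map_eigenvector:
  assumes f: "Vector_Spaces.linear scale (*) f" and g: "f g = 1"
    and M: "Vector_Spaces.linear scale scale M" and fixes_kernel: "\<And>x. f x = 0 \<Longrightarrow> M x = x"
    and L: "Vector_Spaces.linear scale scale L" and comm: "\<And>x. L (M x) = M (L x)"
  shows "L (g - M g) = scale (f (L g)) (g - M g)"
proof -
  interpret L: Vector_Spaces.linear scale scale L by (rule L)
  have "L (g - M g) = L g - M (L g)" by (simp add: L.diff comm)
  also have "\<dots> = scale (f (L g)) (g - M g)" by (rule diff_eq_scale_if_fixes_kernel[OF f g M fixes_kernel])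
  finally show ?thesis .
qed

end

locale trivialized_sheaf = cord_transport sc X r Phi A + vector_space sc
  for sc :: "'k::field \<Rightarrow> 'v::ab_group_add \<Rightarrow> 'v" and X r Phi A +
  fixes W :: "nat \<Rightarrow> 'v set" and f :: "nat \<Rightarrow> 'v \<Rightarrow> 'k" and g :: "nat \<Rightarrow> 'k \<Rightarrow> 'v"
  assumes sheaf: "sheaf_data sc X r Phi A W"
    and trivialization: "local_trivialization sc r W f"
    and right_inverse: "right_inverses sc r f g"
begin

lemma functional_linear: "s < r \<Longrightarrow> Vector_Spaces.linear sc (*) (f s)"
  using trivialization by (simp add: local_trivialization_def)

lemma functional_right_inverse: "s < r \<Longrightarrow> f s (g s 1) = 1"
  using right_inverse by (simp add: right_inverses_def)

lemma functional_eq_0_iff: "s < r \<Longrightarrow> f s x = 0 \<longleftrightarrow> x \<in> W s"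
  using sheaf trivialization unfolding sheaf_data_def local_trivialization_def
  by (metis functional_eq_0_iff_codim_one)

lemma meridian_monodromy_fixes_kernel:
  "s < r \<Longrightarrow> f s x = 0 \<Longrightarrow> meridian_monodromy s x = x"
  using sheaf base_point_in_arc[OF framed_link]
  by (auto simp: sheaf_data_def meridian_monodromy_def functional_eq_0_iff)

lemma longitude_monodromy_image_kernel: "s < r \<Longrightarrow> longitude_monodromy s ` W s = W s"
  using sheaf base_point_in_arc[OF framed_link] by (simp add: sheaf_data_def longitude_monodromy_def)

lemma eps_mu_eq:
  assumes s: "s < r"
  shows "eps_mu A Phi f g s = f s (meridian_monodromy s (g s 1))"
proof -
  interpret f: Vector_Spaces.linear sc "(*)" "f s" by (rule functional_linear[OF s])
  show ?thesis by (simp add: eps_mu_def f.diff functional_right_inverse[OF s] meridian_monodromy_def)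
qed

lemma eps_lambda_eq: "eps_lambda A Phi f g s = f s (longitude_monodromy s (g s 1))"
  by (simp add: eps_lambda_def longitude_monodromy_def)

definition endpoint_vector :: "nat \<Rightarrow> 'v" where
  "endpoint_vector t = g t 1 - meridian_monodromy t (g t 1)"

lemma eps_cord_eq:
  "framed_cord X r Phi s t c \<Longrightarrow> eps_cord A Phi f g s t c = f s (A c (endpoint_vector t))"
  using transport_meridian by (simp add: eps_cord_def endpoint_vector_def framed_cord_def)

lemma functional_image_nonzero:
  assumes s: "s < r" and "inj T" "W s \<subseteq> T ` W s"
  shows "f s (T (g s 1)) \<noteq> 0"
proof -
  have "g s 1 \<notin> W s" using functional_right_inverse[OF s] by (simp flip: functional_eq_0_iff[OF s])
  then show ?thesis
    using inj_not_mem_if_subset_image[OF assms(2,3)] by (simp add: functional_eq_0_iff[OF s])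
qed

lemma kernel_subset_monodromy_image:
  assumes s: "s < r"
  shows "W s \<subseteq> meridian_monodromy s ` W s" and "W s \<subseteq> longitude_monodromy s ` W s"
proof -
  have "meridian_monodromy s w = w" if "w \<in> W s" for w
    using that meridian_monodromy_fixes_kernel[OF s] by (simp add: functional_eq_0_iff[OF s])
  then show "W s \<subseteq> meridian_monodromy s ` W s" by (metis image_eqI subsetI)
  show "W s \<subseteq> longitude_monodromy s ` W s" by (simp add: longitude_monodromy_image_kernel[OF s])
qed

lemma eps_lambda_nonzero: "s < r \<Longrightarrow> eps_lambda A Phi f g s \<noteq> 0"
  unfolding eps_lambda_eq
  by (rule functional_image_nonzero[OF _ monodromy_inj(2) kernel_subset_monodromy_image(2)])

lemma eps_mu_nonzero: "s < r \<Longrightarrow> eps_mu A Phi f g s \<noteq> 0"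
  unfolding eps_mu_eq
  by (rule functional_image_nonzero[OF _ monodromy_inj(1) kernel_subset_monodromy_image(1)])

lemma functional_monodromy:
  assumes s: "s < r"
  shows "f s (meridian_monodromy s x) = f s x * eps_mu A Phi f g s"
    and "f s (longitude_monodromy s x) = f s x * eps_lambda A Phi f g s"
proof -
  note comp = functional_comp_eq_mult[OF functional_linear[OF s] functional_right_inverse[OF s]]
  show "f s (meridian_monodromy s x) = f s x * eps_mu A Phi f g s"
    unfolding eps_mu_eq[OF s]
    by (rule comp[OF monodromy_linear(1)[OF s]]) (simp add: meridian_monodromy_fixes_kernel[OF s])
  have "f s (longitude_monodromy s y) = 0" if "f s y = 0" for y
    using that longitude_monodromy_image_kernel[OF s] by (auto simp: functional_eq_0_iff[OF s])
  then show "f s (longitude_monodromy s x) = f s x * eps_lambda A Phi f g s"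
    unfolding eps_lambda_eq by (rule comp[OF monodromy_linear(2)[OF s]])
qed

lemma monodromy_endpoint_vector:
  assumes t: "t < r"
  shows "meridian_monodromy t (endpoint_vector t) = sc (eps_mu A Phi f g t) (endpoint_vector t)"
    and "longitude_monodromy t (endpoint_vector t) = sc (eps_lambda A Phi f g t) (endpoint_vector t)"
proof -
  have eigen: "L (endpoint_vector t) = sc (f t (L (g t 1))) (endpoint_vector t)"
    if "Vector_Spaces.linear sc sc L" "\<And>x. L (meridian_monodromy t x) = meridian_monodromy t (L x)"
    for L
    unfolding endpoint_vector_def
    by (rule commuting_map_eigenvector[OF functional_linear[OF t] functional_right_inverse[OF t]
          monodromy_linear(1)[OF t] _ that]) (rule meridian_monodromy_fixes_kernel[OF t])
  show "meridian_monodromy t (endpoint_vector t) = sc (eps_mu A Phi f g t) (endpoint_vector t)"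
    using eigen[OF monodromy_linear(1)[OF t]] by (simp add: eps_mu_eq[OF t])
  show "longitude_monodromy t (endpoint_vector t) = sc (eps_lambda A Phi f g t) (endpoint_vector t)"
    using eigen[OF monodromy_linear(2)[OF t]] meridian_longitude_monodromy_commute[OF t]
    by (simp add: eps_lambda_eq fun_eq_iff)
qed

lemma eps_cord_homotopy_invariant:
  assumes "framed_cord X r Phi s t c" "framed_cord X r Phi s t d" "framed_cord_homotopic X r Phi s t c d"
  shows "eps_cord A Phi f g s t c = eps_cord A Phi f g s t d"
  using assms transport_framed_homotopic by (simp add: eps_cord_eq)

lemma eps_cord_constant:
  assumes s: "s < r" and p: "p \<in> arc Phi s"
  shows "eps_cord A Phi f g s s (\<lambda>_. p) = 1 - eps_mu A Phi f g s"
proof -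
  interpret f: Vector_Spaces.linear sc "(*)" "f s" by (rule functional_linear[OF s])
  have "framed_cord X r Phi s s (\<lambda>_. p)"
    using p by (intro framed_cord_within_arc[OF framed_link s]) (auto simp: path_def)
  moreover have "A (\<lambda>_. p) = id"
    using p by (intro transport_within_arc[OF s]) (auto simp: path_def)
  ultimately show ?thesis
    by (simp add: eps_cord_eq endpoint_vector_def eps_mu_eq[OF s] f.diff
        functional_right_inverse[OF s])
qed

lemma eps_cord_meridian_longitude:
  assumes c: "framed_cord X r Phi s t c"
  shows "eps_cord A Phi f g s t (meridian Phi s (pathstart c) +++ c) =
      eps_mu A Phi f g s * eps_cord A Phi f g s t c" (is ?meridian_left)
    and "eps_cord A Phi f g s t (c +++ meridian Phi t (pathfinish c)) =
      eps_cord A Phi f g s t c * eps_mu A Phi f g t" (is ?meridian_right)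
    and "eps_cord A Phi f g s t (longitude Phi s (pathstart c) +++ c) =
      eps_lambda A Phi f g s * eps_cord A Phi f g s t c" (is ?longitude_left)
    and "eps_cord A Phi f g s t (c +++ longitude Phi t (pathfinish c)) =
      eps_cord A Phi f g s t c * eps_lambda A Phi f g t" (is ?longitude_right)
proof -
  have s: "s < r" and t: "t < r" and p: "pathstart c \<in> arc Phi s" and q: "pathfinish c \<in> arc Phi t"
    using c by (auto simp: framed_cord_def)
  interpret Ac: Vector_Spaces.linear sc sc "A c" by (rule transport_linear[OF c])
  interpret f: Vector_Spaces.linear sc "(*)" "f s" by (rule functional_linear[OF s])
  note m0 = framed_cord_meridian[OF framed_link s p] and m1 = framed_cord_meridian[OF framed_link t q]
    and l0 = framed_cord_longitude[OF framed_link s p] and l1 = framed_cord_longitude[OF framed_link t q]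
  have joins: "framed_cord X r Phi s t (meridian Phi s (pathstart c) +++ c)"
    "framed_cord X r Phi s t (c +++ meridian Phi t (pathfinish c))"
    "framed_cord X r Phi s t (longitude Phi s (pathstart c) +++ c)"
    "framed_cord X r Phi s t (c +++ longitude Phi t (pathfinish c))"
    using m0 m1 l0 l1 c by (auto intro: framed_cord_join)
  have "A (meridian Phi s (pathstart c) +++ c) = meridian_monodromy s \<circ> A c"
    "A (c +++ meridian Phi t (pathfinish c)) = A c \<circ> meridian_monodromy t"
    "A (longitude Phi s (pathstart c) +++ c) = longitude_monodromy s \<circ> A c"
    "A (c +++ longitude Phi t (pathfinish c)) = A c \<circ> longitude_monodromy t"
    using transport_join[OF m0(1) c] transport_join[OF c m1(1)] transport_join[OF l0(1) c]
      transport_join[OF c l1(1)] m0 m1 l0 l1 transport_meridian[OF s p] transport_meridian[OF t q]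
      transport_longitude[OF s p] transport_longitude[OF t q]
    by simp_all
  then show ?meridian_left and ?meridian_right and ?longitude_left and ?longitude_right
    using c joins by (simp_all add: eps_cord_eq functional_monodromy[OF s]
        monodromy_endpoint_vector[OF t] Ac.scale f.scale mult.commute)
qed

lemma eps_cord_skein:
  assumes c1: "framed_cord X r Phi s k c1" and c2: "framed_cord X r Phi k t c2"
    and j: "pathfinish c1 = pathstart c2"
  shows "eps_cord A Phi f g s t (c1 +++ c2) =
     eps_cord A Phi f g s t (c1 +++ (meridian Phi k (pathfinish c1) +++ c2)) +
     eps_cord A Phi f g s k c1 * eps_cord A Phi f g k t c2"
proof -
  have s: "s < r" and k: "k < r" and p: "pathfinish c1 \<in> arc Phi k"
    using c1 by (auto simp: framed_cord_def)
  interpret A1: Vector_Spaces.linear sc sc "A c1" by (rule transport_linear[OF c1])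
  interpret f: Vector_Spaces.linear sc "(*)" "f s" by (rule functional_linear[OF s])
  note m = framed_cord_meridian[OF framed_link k p]
  have mc2: "framed_cord X r Phi k t (meridian Phi k (pathfinish c1) +++ c2)"
    using m j by (intro framed_cord_join[OF m(1) c2]) simp
  have c1mc2: "framed_cord X r Phi s t (c1 +++ (meridian Phi k (pathfinish c1) +++ c2))"
    using m by (intro framed_cord_join[OF c1 mc2]) simp
  have via_meridian: "A (c1 +++ (meridian Phi k (pathfinish c1) +++ c2)) =
      A c1 \<circ> (meridian_monodromy k \<circ> A c2)"
    using transport_join[OF c1 mc2] transport_join[OF m(1) c2] m j transport_meridian[OF k p] by simp
  define u where "u = A c2 (endpoint_vector t)"
  have "u - meridian_monodromy k u = sc (f k u) (endpoint_vector k)"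
    unfolding endpoint_vector_def
    by (rule diff_eq_scale_if_fixes_kernel[OF functional_linear[OF k] functional_right_inverse[OF k]
          monodromy_linear(1)[OF k]]) (rule meridian_monodromy_fixes_kernel[OF k])
  then have "f s (A c1 u) - f s (A c1 (meridian_monodromy k u)) = f k u * f s (A c1 (endpoint_vector k))"
    by (simp flip: A1.diff f.diff add: A1.scale f.scale)
  then show ?thesis
    unfolding eps_cord_eq[OF framed_cord_join[OF c1 c2 j]]
      eps_cord_eq[OF c1mc2] eps_cord_eq[OF c1]
      eps_cord_eq[OF c2] transport_join[OF c1 c2 j] via_meridian
    by (simp add: u_def algebra_simps)
qed

end

theorem proposition4p4:
  fixes sc :: "'k::field \<Rightarrow> 'v::ab_group_add \<Rightarrow> 'v"
    and X :: "'a::euclidean_space set"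
    and r :: nat
    and Phi :: "nat \<Rightarrow> complex \<times> complex \<Rightarrow> 'a"
    and A :: "(real \<Rightarrow> 'a) \<Rightarrow> 'v \<Rightarrow> 'v"
    and W :: "nat \<Rightarrow> 'v set"
    and f :: "nat \<Rightarrow> 'v \<Rightarrow> 'k"
    and g :: "nat \<Rightarrow> 'k \<Rightarrow> 'v"
  assumes "(X = UNIV \<and> DIM('a) = 3) \<or> (X = sphere 0 1 \<and> DIM('a) = 4)"
    and "vector_space sc"
    and "framed_link X r Phi"
    and "sheaf_data sc X r Phi A W"
    and "reduced sc X r Phi A W"
    and "local_trivialization sc r W f"
    and "right_inverses sc r f g"
  shows "cord_augmentation X r Phi (eps_cord A Phi f g) (eps_lambda A Phi f g) (eps_mu A Phi f g)"
proof -
  interpret trivialized_sheaf sc X r Phi A W f g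
    using assms(2-4,6,7) by unfold_locales (simp_all add: sheaf_data_def vector_space_def)
  show ?thesis
    unfolding cord_augmentation_def
    by (intro conjI allI impI ballI; (rule eps_cord_skein; blast)?;
        simp add: eps_lambda_nonzero eps_mu_nonzero eps_cord_homotopy_invariant eps_cord_constant
          eps_cord_meridian_longitude)
qed

end
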